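(* Let $d$ be a positive integer, $b\geqslant5$ an integer, $a>0$ real with $\zeta=\log_b a\notin\mathbb{Q}$. Define $f:\mathbb{T}^d\to\mathbb{T}^d$ by $f(x)_i=\{\zeta+\sum_{j=1}^{i}\binom{i}{j}x_j\}$, $i=1,\dots,d$, and for $t\in\{1,\dots,b-1\}$ let $U_t=\{x\in\mathbb{T}^d:\log_b t\leqslant x_d<\log_b(t+1)\}$. For $x,y\in\mathbb{T}^d$ write $x\sim_k y$ if for every $i\in\{0,\dots,k-1\}$ there is $t$ such that $f^i(x)$ and $f^i(y)$ both lie in the closure of $U_t$, and $x\sim y$ if $x\sim_k y$ for all $k\in\mathbb{N}_{>0}$. Let $M$ be the $d\times d$ matrix with $M_{ij}=\binom{i}{j}$ for $j\leqslant i$ and $0$ otherwise, and call $r\in\mathbb{R}^d$ stable if the last coordinate of $M^k r$ is an integer for every $k\in\mathbb{N}_{>0}$. If $x,y\in\mathbb{T}^d$ are such that $y-x$ is not stable, then $x\not\sim y$.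
   Context: $\mathbb{T}^d=\mathbb{R}^d/\mathbb{Z}^d$ identified with $[0,1)^d$; $\{y\}$ is the fractional part. Since $M$ is an integer matrix, every vector in $\mathbb{Z}^d$ is stable and stability of $y-x$ is well defined for $x,y\in\mathbb{T}^d$ (taking any lift to $\mathbb{R}^d$). *)

theory Defs
  imports Complex_Main
begin

text \<open>Points of the torus T^d are represented as functions nat => real whose
coordinates 1..d lie in [0,1) and which vanish outside {1..d}.\<close>

definition torus :: "nat \<Rightarrow> (nat \<Rightarrow> real) set" where
  "torus d = {x. (\<forall>i\<in>{1..d}. 0 \<le> x i \<and> x i < 1) \<and> (\<forall>i. i \<notin> {1..d} \<longrightarrow> x i = 0)}"

definition torus_closure :: "nat \<Rightarrow> (nat \<Rightarrow> real) set \<Rightarrow> (nat \<Rightarrow> real) set" where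
  "torus_closure d U = {x \<in> torus d. \<forall>e>0. \<exists>u\<in>U.
      \<forall>i\<in>{1..d}. \<exists>m::int. \<bar>x i - u i - of_int m\<bar> < e}"

definition fmap :: "real \<Rightarrow> nat \<Rightarrow> (nat \<Rightarrow> real) \<Rightarrow> (nat \<Rightarrow> real)" where
  "fmap \<zeta> d x = (\<lambda>i. if i \<in> {1..d} then frac (\<zeta> + (\<Sum>j=1..i. real (i choose j) * x j)) else 0)"

definition Uset :: "nat \<Rightarrow> nat \<Rightarrow> nat \<Rightarrow> (nat \<Rightarrow> real) set" where
  "Uset b d t = {x \<in> torus d. log (real b) (real t) \<le> x d \<and> x d < log (real b) (real t + 1)}"

definition sim_k :: "nat \<Rightarrow> real \<Rightarrow> nat \<Rightarrow> nat \<Rightarrow> (nat \<Rightarrow> real) \<Rightarrow> (nat \<Rightarrow> real) \<Rightarrow> bool" where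
  "sim_k b \<zeta> d k x y = (\<forall>i<k. \<exists>t\<in>{1..b-1}.
      (fmap \<zeta> d ^^ i) x \<in> torus_closure d (Uset b d t) \<and>
      (fmap \<zeta> d ^^ i) y \<in> torus_closure d (Uset b d t))"

definition sim :: "nat \<Rightarrow> real \<Rightarrow> nat \<Rightarrow> (nat \<Rightarrow> real) \<Rightarrow> (nat \<Rightarrow> real) \<Rightarrow> bool" where
  "sim b \<zeta> d x y = (\<forall>k>0. sim_k b \<zeta> d k x y)"

definition Mmul :: "nat \<Rightarrow> (nat \<Rightarrow> real) \<Rightarrow> (nat \<Rightarrow> real)" where
  "Mmul d r = (\<lambda>i. if i \<in> {1..d} then (\<Sum>j=1..i. real (i choose j) * r j) else 0)"

definition stable :: "nat \<Rightarrow> (nat \<Rightarrow> real) \<Rightarrow> bool" where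
  "stable d r = (\<forall>k>0. (Mmul d ^^ k) r d \<in> \<int>)"

end

theory Submission
  imports Defs "HOL-Analysis.Analysis"
begin

text \<open>
  Put x' = (\<zeta>, x_1, ..., x_d). On the coordinates 1..d the map f is x' \<mapsto> P x' mod 1, where P is the
  lower triangular Pascal matrix, P_il = (i choose l) for 0 \<le> l \<le> i, whose powers have the entries
  (i choose l) k^(i-l). Hence the last coordinates of f^k(x) and f^k(y) are Q(k) mod 1 and
  Q(k) + D(k) mod 1, where Q is a polynomial in k with leading coefficient \<zeta> \<notin> \<rat>, and
  D(k) = (M^k (y - x))_d is a polynomial in k which is not an integer for some k, as y - x is not stable.

  The closed digit arcs [log_b t, log_b (t+1)] have length at most L = log_b 2 < 1/2 (this is where
  b \<ge> 5 enters), and only the first of them meets (0, L). So x \<sim> y fails as soon as, for some k,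
  either D(k) mod 1 lies in (L, 1 - L) or the two points lie in (0,1) on different sides of L.
  If some non-constant coefficient of D is irrational, then D(k) mod 1 is dense by Weyl's theorem
  on polynomial sequences (proved via van der Corput's inequality), and the first alternative occurs.
  Otherwise D is periodic mod 1 and takes a constant non-integral value \<sigma> mod 1 along an arithmetic
  progression of k, on which Q(k) mod 1 is still dense; placing it just below or just above L,
  according to the size of \<sigma>, yields the second alternative.
\<close>

section \<open>Polynomial sequences\<close>

definition cpoly :: "(nat \<Rightarrow> real) \<Rightarrow> nat \<Rightarrow> real \<Rightarrow> real" where
  "cpoly c n x = (\<Sum>j\<le>n. c j * x ^ j)"

lemma sum_atMost_triangle_swap:
  fixes g :: "nat \<Rightarrow> nat \<Rightarrow> 'a::comm_monoid_add"
  shows "(\<Sum>j\<le>n. \<Sum>i\<le>j. g i j) = (\<Sum>i\<le>n. \<Sum>j=i..n. g i j)"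
proof (induction n)
  case (Suc n)
  have "(\<Sum>i\<le>Suc n. \<Sum>j=i..Suc n. g i j) = (\<Sum>i\<le>n. (\<Sum>j=i..n. g i j) + g i (Suc n)) + g (Suc n) (Suc n)"
    by (simp add: sum.cl_ivl_Suc)
  then show ?case using Suc by (simp add: sum.distrib add_ac)
qed simp

lemma cpoly_affine:
  "cpoly c n (a + s * x) = cpoly (\<lambda>i. \<Sum>j=i..n. c j * real (j choose i) * a ^ (j - i) * s ^ i) n x"
proof -
  have "cpoly c n (a + s * x) = (\<Sum>j\<le>n. \<Sum>i\<le>j. c j * real (j choose i) * a ^ (j - i) * s ^ i * x ^ i)"
    unfolding cpoly_def add.commute[of a] binomial_ring
    by (simp add: sum_distrib_left power_mult_distrib mult_ac)
  also have "\<dots> = cpoly (\<lambda>i. \<Sum>j=i..n. c j * real (j choose i) * a ^ (j - i) * s ^ i) n x"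
    by (simp add: sum_atMost_triangle_swap cpoly_def sum_distrib_right)
  finally show ?thesis .
qed

lemma cpoly_difference:
  "\<exists>c'. c' n = real (Suc n) * h * c (Suc n) \<and>
        (\<forall>x. cpoly c (Suc n) (x + h) - cpoly c (Suc n) x = cpoly c' n x)"
proof -
  define c' where "c' i = (\<Sum>j=i..Suc n. c j * real (j choose i) * h ^ (j - i)) - c i" for i
  have "{n..Suc n} = {n, Suc n}" by auto
  then have "c' n = real (Suc n) * h * c (Suc n)"
    by (simp add: c'_def)
  moreover have "cpoly c (Suc n) (x + h) - cpoly c (Suc n) x = cpoly c' n x" for x
  proof -
    have "cpoly c (Suc n) (x + h) - cpoly c (Suc n) x = cpoly c' (Suc n) x"
      using cpoly_affine[of c "Suc n" h 1 x]
      by (simp add: add.commute cpoly_def c'_def sum_subtractf algebra_simps)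
    also have "\<dots> = cpoly c' n x"
      by (simp add: cpoly_def c'_def)
    finally show ?thesis .
  qed
  ultimately show ?thesis by blast
qed

lemma cpoly_scale: "cpoly (\<lambda>i. h * c i) n x = h * cpoly c n x"
  by (simp add: cpoly_def sum_distrib_left mult_ac)

section \<open>Van der Corput's inequality\<close>

lemma norm_sum_shift_le:
  fixes w :: "nat \<Rightarrow> 'a::real_normed_vector"
  assumes "\<And>m. norm (w m) \<le> 1"
  shows "norm ((\<Sum>m<K. w (m + a)) - (\<Sum>m<K. w m)) \<le> 2 * real a"
proof (induction a)
  case (Suc a)
  have "(\<Sum>m<Suc K. w (m + a)) = w a + (\<Sum>m<K. w (m + Suc a))"
    by (subst sum.lessThan_Suc_shift) simp
  then have "(\<Sum>m<K. w (m + Suc a)) - (\<Sum>m<K. w m)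
      = ((\<Sum>m<K. w (m + a)) - (\<Sum>m<K. w m)) + (w (K + a) - w a)"
    by (simp add: algebra_simps)
  also have "norm \<dots> \<le> 2 * real a + (norm (w (K + a)) + norm (w a))"
    using Suc norm_triangle_ineq4[of "w (K + a)" "w a"] norm_triangle_ineq by (smt (verit))
  also have "\<dots> \<le> 2 * real (Suc a)"
    using assms[of "K + a"] assms[of a] by simp
  finally show ?case .
qed simp

lemma bounded_divide_of_nat_tendsto_0:
  fixes s :: "nat \<Rightarrow> 'a::real_normed_field"
  assumes "\<And>K. norm (s K) \<le> B"
  shows "(\<lambda>K. s K / of_nat K) \<longlonglongrightarrow> 0"
proof (rule Lim_null_comparison)
  show "\<forall>\<^sub>F K in sequentially. norm (s K / of_nat K) \<le> B / real K"
    using assms by (auto simp: norm_divide divide_right_mono)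
  show "(\<lambda>K. B / real K) \<longlonglongrightarrow> 0"
    by (intro tendsto_divide_0[OF tendsto_const] filterlim_at_top_imp_at_infinity filterlim_real_sequentially)
qed

lemma van_der_corput_inequality:
  fixes u :: "nat \<Rightarrow> complex"
  assumes u: "\<And>m. norm (u m) \<le> 1"
  shows "real H * norm (\<Sum>m<K. u m)
    \<le> sqrt (real K * (\<Sum>l<H. \<Sum>l'<H. norm (\<Sum>m<K. u (m + l) * cnj (u (m + l')))))
       + 2 * (real H)\<^sup>2"
proof -
  define S where "S = (\<Sum>m<K. u m)"
  define B where "B m = (\<Sum>l<H. u (m + l))" for m
  define A where "A = (\<Sum>m<K. B m)"
  have "A = (\<Sum>l<H. \<Sum>m<K. u (m + l))"
    unfolding A_def B_def by (rule sum.swap)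
  then have "norm (of_nat H * S - A) = norm (\<Sum>l<H. (\<Sum>m<K. u (m + l)) - S)"
    by (simp add: sum_subtractf norm_minus_commute)
  also have "\<dots> \<le> (\<Sum>l<H. 2 * real H)"
    unfolding S_def
    by (intro order_trans[OF norm_sum] sum_mono order_trans[OF norm_sum_shift_le[OF u]]) auto
  finally have shift: "real H * norm S \<le> norm A + 2 * (real H)\<^sup>2"
    using norm_triangle_ineq2[of "of_nat H * S" A] by (simp add: norm_mult power2_eq_square)
  have "(norm A)\<^sup>2 \<le> (\<Sum>m<K. 1 * norm (B m))\<^sup>2"
    unfolding A_def by (simp add: norm_sum power_mono)
  also have "\<dots> \<le> real K * (\<Sum>m<K. (norm (B m))\<^sup>2)"
    using Cauchy_Schwarz_ineq_sum[of "\<lambda>_. 1" "\<lambda>m. norm (B m)" "{..<K}"] by simp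
  also have "(\<Sum>m<K. (norm (B m))\<^sup>2) = norm (complex_of_real (\<Sum>m<K. (norm (B m))\<^sup>2))"
    by (simp only: norm_of_real abs_of_nonneg[OF sum_nonneg[OF zero_le_power2]])
  also have "complex_of_real (\<Sum>m<K. (norm (B m))\<^sup>2) = (\<Sum>m<K. B m * cnj (B m))"
    by (simp only: of_real_sum complex_norm_square)
  also have "(\<Sum>m<K. B m * cnj (B m)) = (\<Sum>l<H. \<Sum>l'<H. \<Sum>m<K. u (m + l) * cnj (u (m + l')))"
    unfolding B_def by (simp add: cnj_sum sum_product sum.swap[of _ "{..<K}"])
  also have "norm \<dots> \<le> (\<Sum>l<H. \<Sum>l'<H. norm (\<Sum>m<K. u (m + l) * cnj (u (m + l'))))"
    by (rule order_trans[OF norm_sum sum_mono[OF norm_sum]])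
  finally have "norm A \<le> sqrt (real K * (\<Sum>l<H. \<Sum>l'<H. norm (\<Sum>m<K. u (m + l) * cnj (u (m + l')))))"
    by (simp add: real_le_rsqrt mult_left_mono)
  with shift show ?thesis unfolding S_def by linarith
qed

lemma correlation_tendsto_0:
  fixes u :: "nat \<Rightarrow> complex"
  assumes u: "\<And>m. norm (u m) \<le> 1"
    and hyp: "\<And>h. h > 0 \<Longrightarrow> (\<lambda>K. (\<Sum>m<K. u (m + h) * cnj (u m)) / of_nat K) \<longlonglongrightarrow> 0"
    and "l \<noteq> l'"
  shows "(\<lambda>K. (\<Sum>m<K. u (m + l) * cnj (u (m + l'))) / of_nat K) \<longlonglongrightarrow> 0"
proof -
  have less: "(\<lambda>K. (\<Sum>m<K. u (m + l) * cnj (u (m + l'))) / of_nat K) \<longlonglongrightarrow> 0"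
    if "l' < l" for l l'
  proof -
    define w where "w m = u (m + (l - l')) * cnj (u m)" for m
    have "norm (w m) \<le> 1" for m
      using u[of m] u[of "m + (l - l')"] by (simp add: w_def norm_mult mult_le_one)
    then have "(\<lambda>K. ((\<Sum>m<K. w (m + l')) - (\<Sum>m<K. w m)) / of_nat K) \<longlonglongrightarrow> 0"
      by (intro bounded_divide_of_nat_tendsto_0[where B="2 * real l'"] norm_sum_shift_le)
    moreover have "(\<lambda>K. (\<Sum>m<K. w m) / of_nat K) \<longlonglongrightarrow> 0"
      using hyp[of "l - l'"] that by (simp add: w_def)
    ultimately have "(\<lambda>K. (\<Sum>m<K. w m) / of_nat K + ((\<Sum>m<K. w (m + l')) - (\<Sum>m<K. w m)) / of_nat K)
        \<longlonglongrightarrow> 0"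
      using tendsto_add by fastforce
    then have "(\<lambda>K. (\<Sum>m<K. w (m + l')) / of_nat K) \<longlonglongrightarrow> 0"
      by (simp add: diff_divide_distrib)
    moreover have "w (m + l') = u (m + l) * cnj (u (m + l'))" for m
      using that by (simp add: w_def)
    ultimately show ?thesis by simp
  qed
  show ?thesis
  proof (cases "l' < l")
    case False
    with \<open>l \<noteq> l'\<close> have "(\<lambda>K. cnj ((\<Sum>m<K. u (m + l') * cnj (u (m + l))) / of_nat K)) \<longlonglongrightarrow> 0"
      using tendsto_cnj[OF less[of l l']] by simp
    then show ?thesis by (simp add: cnj_sum mult.commute)
  qed (rule less)
qed

lemma eventually_correlation_sum_le:
  fixes u :: "nat \<Rightarrow> complex"
  assumes u: "\<And>m. norm (u m) \<le> 1"
    and hyp: "\<And>h. h > 0 \<Longrightarrow> (\<lambda>K. (\<Sum>m<K. u (m + h) * cnj (u m)) / of_nat K) \<longlonglongrightarrow> 0"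
    and "H > 0"
  shows "\<forall>\<^sub>F K in sequentially.
    (\<Sum>l<H. \<Sum>l'<H. norm (\<Sum>m<K. u (m + l) * cnj (u (m + l')))) \<le> (real H + 1) * real K"
proof -
  define T where "T l l' K = (\<Sum>m<K. u (m + l) * cnj (u (m + l')))" for l l' K
  have diagonal: "norm (T l l K) \<le> real K" for l K
  proof -
    have "norm (T l l K) \<le> (\<Sum>m<K. norm (u (m + l) * cnj (u (m + l))))"
      unfolding T_def by (rule norm_sum)
    also have "\<dots> \<le> (\<Sum>m<K. 1)"
      by (intro sum_mono) (simp add: norm_mult mult_le_one u)
    finally show ?thesis by simp
  qed
  have "\<forall>\<^sub>F K in sequentially. \<forall>p\<in>{..<H} \<times> {..<H}. fst p \<noteq> snd p \<longrightarrow>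
      norm (T (fst p) (snd p) K / of_nat K) < 1 / (real H)\<^sup>2"
    using \<open>H > 0\<close>
    by (intro eventually_ball_finite ballI impI)
       (auto simp: T_def intro!: tendstoD[OF correlation_tendsto_0[OF u hyp], simplified])
  then show ?thesis
  proof (rule eventually_mono)
    fix K
    assume off_diagonal: "\<forall>p\<in>{..<H} \<times> {..<H}. fst p \<noteq> snd p \<longrightarrow>
      norm (T (fst p) (snd p) K / of_nat K) < 1 / (real H)\<^sup>2"
    have "(\<Sum>l<H. \<Sum>l'<H. norm (T l l' K))
        \<le> (\<Sum>l<H. \<Sum>l'<H. (if l = l' then real K else 0) + real K / (real H)\<^sup>2)"
    proof (intro sum_mono)
      fix l l' assume "l \<in> {..<H}" "l' \<in> {..<H}"
      show "norm (T l l' K) \<le> (if l = l' then real K else 0) + real K / (real H)\<^sup>2"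
      proof (cases "l = l'")
        case True
        then show ?thesis using diagonal[of l K] by (simp add: add_increasing2)
      next
        case False
        with off_diagonal \<open>l \<in> {..<H}\<close> \<open>l' \<in> {..<H}\<close>
        have "norm (T l l' K) / real K < 1 / (real H)\<^sup>2"
          by (auto simp: norm_divide)
        with False show ?thesis
          by (cases "K = 0") (simp_all add: field_simps T_def)
      qed
    qed
    also have "\<dots> = (real H + 1) * real K"
      using \<open>H > 0\<close> by (simp add: sum.distrib power2_eq_square algebra_simps)
    finally show "(\<Sum>l<H. \<Sum>l'<H. norm (\<Sum>m<K. u (m + l) * cnj (u (m + l'))))
        \<le> (real H + 1) * real K"
      by (simp add: T_def)
  qed
qed

lemma van_der_corput_bound:
  fixes u :: "nat \<Rightarrow> complex"
  assumes u: "\<And>m. norm (u m) \<le> 1" and "H > 0" "K > 0"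
    and correlations: "(\<Sum>l<H. \<Sum>l'<H. norm (\<Sum>m<K. u (m + l) * cnj (u (m + l')))) \<le> (real H + 1) * real K"
  shows "norm (\<Sum>m<K. u m) / real K \<le> sqrt (real H + 1) / real H + 2 * real H / real K"
proof -
  have "sqrt (real K * (\<Sum>l<H. \<Sum>l'<H. norm (\<Sum>m<K. u (m + l) * cnj (u (m + l')))))
      \<le> sqrt (real K * ((real H + 1) * real K))"
    by (intro real_sqrt_le_mono mult_left_mono correlations) simp
  then have "real H * norm (\<Sum>m<K. u m) \<le> sqrt (real K * ((real H + 1) * real K)) + 2 * (real H)\<^sup>2"
    using van_der_corput_inequality[where u=u and H=H and K=K, OF u] by linarith
  also have "sqrt (real K * ((real H + 1) * real K)) = real K * sqrt (real H + 1)"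
    by (simp add: real_sqrt_mult)
  finally show ?thesis
    using assms(2,3) by (simp add: field_simps power2_eq_square)
qed

lemma van_der_corput:
  fixes u :: "nat \<Rightarrow> complex"
  assumes u: "\<And>m. norm (u m) \<le> 1"
    and hyp: "\<And>h. h > 0 \<Longrightarrow> (\<lambda>K. (\<Sum>m<K. u (m + h) * cnj (u m)) / of_nat K) \<longlonglongrightarrow> 0"
  shows "(\<lambda>K. (\<Sum>m<K. u m) / of_nat K) \<longlonglongrightarrow> 0"
proof (rule tendstoI)
  fix \<epsilon> :: real
  assume "\<epsilon> > 0"
  obtain H :: nat where "8 / \<epsilon>\<^sup>2 < real H"
    using reals_Archimedean2 by blast
  with \<open>\<epsilon> > 0\<close> have "H > 0" "8 < \<epsilon>\<^sup>2 * real H"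
    by (auto simp: field_simps intro: Nat.gr0I)
  have "sqrt (real H + 1) \<le> \<epsilon> * real H / 2"
  proof (rule real_le_lsqrt)
    have "8 * real H < (\<epsilon>\<^sup>2 * real H) * real H"
      using \<open>8 < \<epsilon>\<^sup>2 * real H\<close> \<open>H > 0\<close> by (intro mult_strict_right_mono) auto
    moreover have "(\<epsilon> * real H / 2)\<^sup>2 = (\<epsilon>\<^sup>2 * real H) * real H / 4"
      by (simp add: power2_eq_square)
    ultimately show "real H + 1 \<le> (\<epsilon> * real H / 2)\<^sup>2"
      using \<open>H > 0\<close> by linarith
  qed (use \<open>\<epsilon> > 0\<close> in auto)
  then have "sqrt (real H + 1) / real H \<le> \<epsilon> / 2"
    using \<open>H > 0\<close> by (simp add: field_simps)
  have "\<forall>\<^sub>F K in sequentially.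
      (\<Sum>l<H. \<Sum>l'<H. norm (\<Sum>m<K. u (m + l) * cnj (u (m + l')))) \<le> (real H + 1) * real K"
    by (rule eventually_correlation_sum_le[OF u hyp \<open>H > 0\<close>])
  moreover have "\<forall>\<^sub>F K in sequentially. 4 * real H / \<epsilon> < real K"
    using filterlim_real_sequentially by (simp add: filterlim_at_top_dense)
  ultimately show "\<forall>\<^sub>F K in sequentially. dist ((\<Sum>m<K. u m) / of_nat K) 0 < \<epsilon>"
  proof eventually_elim
    case (elim K)
    have "0 < 4 * real H / \<epsilon>"
      using \<open>H > 0\<close> \<open>\<epsilon> > 0\<close> by simp
    with elim(2) have "K > 0" by simp
    have "2 * real H / real K < \<epsilon> / 2"
      using elim(2) \<open>\<epsilon> > 0\<close> \<open>K > 0\<close> by (simp add: field_simps)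
    with van_der_corput_bound[OF u \<open>H > 0\<close> \<open>K > 0\<close> elim(1)]
      \<open>sqrt (real H + 1) / real H \<le> \<epsilon> / 2\<close>
    have "norm (\<Sum>m<K. u m) / real K < \<epsilon>"
      by linarith
    then show ?case
      by (simp add: norm_divide)
  qed
qed

section \<open>Weyl's theorem for polynomial sequences\<close>

definition e2pi :: "real \<Rightarrow> complex" where
  "e2pi t = cis (2 * pi * t)"

lemma e2pi_add: "e2pi (s + t) = e2pi s * e2pi t"
  by (simp add: e2pi_def cis_mult distrib_left)

lemma norm_e2pi [simp]: "norm (e2pi t) = 1"
  by (simp add: e2pi_def)

lemma e2pi_mult_cnj: "e2pi s * cnj (e2pi t) = e2pi (s - t)"
  by (simp add: e2pi_def cis_cnj cis_mult right_diff_distrib)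

lemma e2pi_power: "e2pi t ^ j = e2pi (real j * t)"
  unfolding e2pi_def Complex.DeMoivre by (simp add: mult_ac)

lemma e2pi_eq_1_iff: "e2pi t = 1 \<longleftrightarrow> t \<in> \<int>"
proof
  assume "e2pi t = 1"
  then have "cos (2 * pi * t) = 1"
    by (metis e2pi_def cis.sel(1) one_complex.sel(1))
  then obtain n :: int where "2 * pi * t = of_int n * 2 * pi"
    by (auto simp: cos_one_2pi_int)
  then show "t \<in> \<int>" by simp
qed (simp add: e2pi_def)

lemma norm_e2pi_minus_1_squared: "(norm (e2pi t - 1))\<^sup>2 = 2 - 2 * cos (2 * pi * t)"
proof -
  have "(norm (e2pi t - 1))\<^sup>2 = (cos (2 * pi * t) - 1)\<^sup>2 + (sin (2 * pi * t))\<^sup>2"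
    by (simp add: e2pi_def cmod_power2 cis.ctr)
  then show ?thesis
    using sin_cos_squared_add[of "2 * pi * t"] by (simp add: power2_eq_square algebra_simps)
qed

lemma norm_geometric_sum_le:
  fixes z :: complex
  assumes "norm z = 1" "z \<noteq> 1"
  shows "norm (\<Sum>j<J. z ^ j) \<le> 2 / norm (1 - z)"
proof -
  have "norm (1 - z ^ J) \<le> norm (1::complex) + norm (z ^ J)"
    by (rule norm_triangle_ineq4)
  also have "\<dots> = 2"
    using assms(1) by (simp add: norm_power)
  finally show ?thesis
    using assms(2) by (simp add: sum_gp_strict norm_divide divide_right_mono)
qed

theorem weyl_polynomial:
  "c (Suc n) \<notin> \<rat> \<Longrightarrow> (\<lambda>K. (\<Sum>m<K. e2pi (cpoly c (Suc n) (real m))) / of_nat K) \<longlonglongrightarrow> 0"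
proof (induction n arbitrary: c)
  case 0
  define z where "z = e2pi (c 1)"
  have "z \<noteq> 1"
    using 0 Ints_subset_Rats by (auto simp: z_def e2pi_eq_1_iff)
  have "(\<Sum>m<K. e2pi (cpoly c (Suc 0) (real m))) = e2pi (c 0) * (\<Sum>m<K. z ^ m)" for K
    by (simp add: cpoly_def sum_distrib_left z_def e2pi_power e2pi_add mult.commute)
  then have "norm (\<Sum>m<K. e2pi (cpoly c (Suc 0) (real m))) \<le> 2 / norm (1 - z)" for K
    using norm_geometric_sum_le[OF _ \<open>z \<noteq> 1\<close>] by (simp add: norm_mult z_def)
  then show ?case
    by (rule bounded_divide_of_nat_tendsto_0)
next
  case (Suc n)
  show ?case
  proof (rule van_der_corput)
    fix h :: nat
    assume "h > 0"
    obtain c' where c': "c' (Suc n) = real (Suc (Suc n)) * real h * c (Suc (Suc n))"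
      "\<And>x. cpoly c (Suc (Suc n)) (x + real h) - cpoly c (Suc (Suc n)) x = cpoly c' (Suc n) x"
      using cpoly_difference by blast
    have "c' (Suc n) \<notin> \<rat>"
      using Suc.prems \<open>h > 0\<close> by (simp add: c' Rats_mult_iff)
    from Suc.IH[of c', OF this]
    show "(\<lambda>K. (\<Sum>m<K. e2pi (cpoly c (Suc (Suc n)) (real (m + h)))
                    * cnj (e2pi (cpoly c (Suc (Suc n)) (real m)))) / of_nat K) \<longlonglongrightarrow> 0"
      by (simp add: e2pi_mult_cnj c'(2)[symmetric])
  qed simp
qed

lemma mean_square_exponential_sums_tendsto:
  assumes irrational: "c (Suc n) \<notin> \<rat>"
  shows "(\<lambda>K. (\<Sum>m<K. (norm (\<Sum>j<J. e2pi (real j * cpoly c (Suc n) (real m))))\<^sup>2) / real K)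
           \<longlonglongrightarrow> real J"
proof -
  define p where "p m = cpoly c (Suc n) (real m)" for m
  have cross: "(\<lambda>K. (\<Sum>m<K. e2pi ((real j - real j') * p m)) / of_nat K) \<longlonglongrightarrow> (if j = j' then 1 else 0)"
    for j j'
  proof (cases "j = j'")
    case True
    then have "\<forall>\<^sub>F K in sequentially. (\<Sum>m<K. e2pi ((real j - real j') * p m)) / of_nat K = 1"
      using eventually_gt_at_top[of "0::nat"] by (auto simp: e2pi_def elim: eventually_mono)
    with True show ?thesis by (simp add: tendsto_eventually)
  next
    case False
    then have "(real j - real j') * c (Suc n) \<notin> \<rat>"
      using irrational by (simp add: Rats_mult_iff)
    from weyl_polynomial[of "\<lambda>i. (real j - real j') * c i", OF this] False show ?thesis
      by (simp add: cpoly_scale p_def)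
  qed
  have "complex_of_real ((\<Sum>m<K. (norm (\<Sum>j<J. e2pi (real j * p m)))\<^sup>2) / real K)
      = (\<Sum>j<J. \<Sum>j'<J. (\<Sum>m<K. e2pi ((real j - real j') * p m)) / of_nat K)" for K
  proof -
    have "complex_of_real (\<Sum>m<K. (norm (\<Sum>j<J. e2pi (real j * p m)))\<^sup>2)
        = (\<Sum>m<K. (\<Sum>j<J. e2pi (real j * p m)) * cnj (\<Sum>j<J. e2pi (real j * p m)))"
      by (simp only: of_real_sum complex_norm_square)
    also have "\<dots> = (\<Sum>j<J. \<Sum>j'<J. \<Sum>m<K. e2pi ((real j - real j') * p m))"
      by (simp add: cnj_sum sum_product e2pi_mult_cnj left_diff_distrib sum.swap[of _ "{..<K}"])
    finally have sums: "complex_of_real (\<Sum>m<K. (norm (\<Sum>j<J. e2pi (real j * p m)))\<^sup>2)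
        = (\<Sum>j<J. \<Sum>j'<J. \<Sum>m<K. e2pi ((real j - real j') * p m))" .
    show ?thesis
      unfolding of_real_divide of_real_of_nat_eq sums by (simp only: sum_divide_distrib)
  qed
  moreover have "(\<lambda>K. \<Sum>j<J. \<Sum>j'<J. (\<Sum>m<K. e2pi ((real j - real j') * p m)) / of_nat K)
      \<longlonglongrightarrow> (\<Sum>j<J. \<Sum>j'<J. if j = j' then 1 else 0)"
    by (intro tendsto_sum cross)
  ultimately have "(\<lambda>K. complex_of_real ((\<Sum>m<K. (norm (\<Sum>j<J. e2pi (real j * p m)))\<^sup>2) / real K))
      \<longlonglongrightarrow> complex_of_real (real J)"
    by simp
  then show ?thesis
    unfolding p_def tendsto_of_real_iff .
qed

lemma cos_2pi_le_if_between:
  assumes "0 < e" "e \<le> 1/2" "e \<le> f" "e \<le> 1 - f"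
  shows "cos (2 * pi * f) \<le> cos (2 * pi * e)"
proof (cases "f \<le> 1/2")
  case True
  then show ?thesis
    using assms by (intro cos_monotone_0_pi_le) auto
next
  case False
  have "cos (2 * pi * f) = cos (2 * pi * (1 - f))"
    by (simp add: algebra_simps cos_diff)
  also have "\<dots> \<le> cos (2 * pi * e)"
    using assms False by (intro cos_monotone_0_pi_le) auto
  finally show ?thesis .
qed

lemma norm_e2pi_minus_1_lower_bound:
  assumes "0 < e" "e \<le> 1/2" and far: "\<And>z::int. e \<le> \<bar>t - of_int z\<bar>"
  shows "2 - 2 * cos (2 * pi * e) \<le> (norm (e2pi t - 1))\<^sup>2"
proof -
  have "e \<le> frac t" "e \<le> 1 - frac t"
    using far[of "\<lfloor>t\<rfloor>"] far[of "\<lfloor>t\<rfloor> + 1"] frac_lt_1[of t] by (auto simp: frac_def)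
  moreover have "e2pi t = e2pi (frac t)"
    by (metis e2pi_add e2pi_eq_1_iff frac_def Ints_of_int diff_add_cancel mult.right_neutral)
  ultimately show ?thesis
    using cos_2pi_le_if_between[OF assms(1,2)] by (simp add: norm_e2pi_minus_1_squared)
qed

lemma norm_exponential_sum_le_if_far_from_Ints:
  assumes "0 < e" "e \<le> 1/2" "\<And>z::int. e \<le> \<bar>s - of_int z\<bar>"
  shows "(norm (\<Sum>j<J. e2pi (real j * s)))\<^sup>2 \<le> 4 / (2 - 2 * cos (2 * pi * e))"
proof -
  define \<gamma> where "\<gamma> = 2 - 2 * cos (2 * pi * e)"
  define z where "z = e2pi s"
  have "cos (2 * pi * e) < cos 0"
    using assms(1,2) by (intro cos_monotone_0_pi) auto
  then have "\<gamma> > 0"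
    by (simp add: \<gamma>_def)
  have "\<gamma> \<le> (norm (z - 1))\<^sup>2"
    unfolding z_def \<gamma>_def using assms by (rule norm_e2pi_minus_1_lower_bound)
  with \<open>\<gamma> > 0\<close> have "z \<noteq> 1"
    by auto
  have "(norm (\<Sum>j<J. z ^ j))\<^sup>2 \<le> (2 / norm (1 - z))\<^sup>2"
    using norm_geometric_sum_le[of z J] \<open>z \<noteq> 1\<close> by (intro power_mono) (auto simp: z_def)
  also have "\<dots> \<le> 4 / \<gamma>"
    using \<open>\<gamma> \<le> (norm (z - 1))\<^sup>2\<close> \<open>\<gamma> > 0\<close>
    by (simp add: power_divide norm_minus_commute frac_le)
  finally show ?thesis
    by (simp add: z_def \<gamma>_def e2pi_power)
qed

theorem polynomial_dense_mod_1:
  assumes irrational: "c (Suc n) \<notin> \<rat>" and "e > 0"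
  shows "\<exists>m::nat. \<exists>z::int. \<bar>cpoly c (Suc n) (real m) - t - of_int z\<bar> < e"
proof (rule ccontr)
  txt \<open>
    If p(m) - t stays away from the integers, the geometric sums \<Sum>j<J. e(j (p(m) - t)) are bounded
    uniformly in J and m, whereas by Weyl's theorem their mean square over m tends to J.
  \<close>
  assume far: "\<not> ?thesis"
  define c' where "c' = c(0 := c 0 - t)"
  have c': "cpoly c' (Suc n) x = cpoly c (Suc n) x - t" for x
    by (simp add: cpoly_def c'_def sum.atMost_Suc_shift del: sum.atMost_Suc)
  define e' where "e' = min e (1/2)"
  define B where "B = 4 / (2 - 2 * cos (2 * pi * e'))"
  have bound: "(norm (\<Sum>j<J. e2pi (real j * cpoly c' (Suc n) (real m))))\<^sup>2 \<le> B" for J m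
    unfolding B_def using far \<open>e > 0\<close>
    by (intro norm_exponential_sum_le_if_far_from_Ints)
       (auto simp: c' e'_def not_less intro: min.coboundedI1)
  obtain J :: nat where "B < real J"
    using reals_Archimedean2 by blast
  have "c' (Suc n) \<notin> \<rat>"
    using irrational by (simp add: c'_def)
  then have "real J \<le> B"
  proof (rule LIMSEQ_le_const2[OF mean_square_exponential_sums_tendsto])
    show "\<exists>N. \<forall>K\<ge>N. (\<Sum>m<K. (norm (\<Sum>j<J. e2pi (real j * cpoly c' (Suc n) (real m))))\<^sup>2) / real K \<le> B"
    proof (intro exI allI impI)
      fix K :: nat
      assume "K \<ge> 1"
      have "(\<Sum>m<K. (norm (\<Sum>j<J. e2pi (real j * cpoly c' (Suc n) (real m))))\<^sup>2) \<le> (\<Sum>m<K. B)"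
        by (intro sum_mono bound)
      with \<open>K \<ge> 1\<close> show "(\<Sum>m<K. (norm (\<Sum>j<J. e2pi (real j * cpoly c' (Suc n) (real m))))\<^sup>2) / real K \<le> B"
        by (simp add: pos_divide_le_eq mult.commute)
    qed
  qed
  with \<open>B < real J\<close> show False by simp
qed

section \<open>Polynomial sequences with rational coefficients\<close>

lemma Rats_common_denominator:
  assumes "finite S" "\<forall>j\<in>S. c j \<in> \<rat>"
  shows "\<exists>N::nat. N > 0 \<and> (\<forall>j\<in>S. real N * c j \<in> \<int>)"
  using assms
proof (induction S rule: finite_induct)
  case (insert a S)
  then obtain N :: nat where N: "N > 0" "\<forall>j\<in>S. real N * c j \<in> \<int>"
    by auto
  obtain p q :: int where "q > 0" "c a = of_int p / of_int q"
    using insert.prems by (auto elim!: Rats_cases')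
  then have "real (N * nat q) * c a \<in> \<int>"
    by simp
  moreover have "real (N * nat q) * c j \<in> \<int>" if "j \<in> S" for j
    using N(2) that \<open>q > 0\<close> Ints_mult[OF Ints_of_int[of q], of "real N * c j"] by (simp add: mult_ac)
  ultimately show ?case
    using N(1) \<open>q > 0\<close> by (intro exI[of _ "N * nat q"]) auto
qed (intro exI[of _ "1::nat"], simp)

lemma cpoly_dense_mod_1:
  assumes "j \<in> {1..n}" "c j \<notin> \<rat>" "e > 0"
  shows "\<exists>m::nat. \<exists>z::int. \<bar>cpoly c n (real m) - t - of_int z\<bar> < e"
proof -
  define i where "i = Max {j\<in>{1..n}. c j \<notin> \<rat>}"
  have "i \<in> {j\<in>{1..n}. c j \<notin> \<rat>}"
    unfolding i_def using assms by (intro Max_in) auto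
  then have i: "1 \<le> i" "i \<le> n" "c i \<notin> \<rat>"
    by auto
  have "\<forall>j\<in>{i<..n}. c j \<in> \<rat>"
  proof (rule ballI, rule ccontr)
    fix j assume "j \<in> {i<..n}" "c j \<notin> \<rat>"
    then have "j \<le> i"
      unfolding i_def by (intro Max_ge) auto
    with \<open>j \<in> {i<..n}\<close> show False by simp
  qed
  then obtain N :: nat where N: "N > 0" "\<forall>j\<in>{i<..n}. real N * c j \<in> \<int>"
    using Rats_common_denominator[of "{i<..n}" c] by auto
  txt \<open>Along the multiples of N the monomials of degree above i take integer values.\<close>
  define c' where "c' j = c j * real N ^ j" for j
  have "c' (Suc (i - 1)) \<notin> \<rat>"
    using i N(1) by (simp add: c'_def Rats_mult_iff)
  then obtain m :: nat and z :: int where mz: "\<bar>cpoly c' i (real m) - t - of_int z\<bar> < e"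
    using polynomial_dense_mod_1[OF _ \<open>e > 0\<close>, of c' "i - 1" t] i(1) by auto
  define I where "I = (\<Sum>j\<in>{i<..n}. c' j * real m ^ j)"
  have "I \<in> \<int>"
  proof (unfold I_def, intro Ints_sum)
    fix j assume "j \<in> {i<..n}"
    then have "c' j * real m ^ j = (real N * c j) * (real N ^ (j - 1) * real m ^ j)"
      by (simp add: c'_def power_eq_if)
    moreover have "real N * c j \<in> \<int>"
      using N(2) \<open>j \<in> {i<..n}\<close> by simp
    ultimately show "c' j * real m ^ j \<in> \<int>"
      by (metis Ints_mult Ints_power Ints_of_nat)
  qed
  then obtain zI :: int where "I = of_int zI"
    by (auto elim: Ints_cases)
  have "{..n} = {..i} \<union> {i<..n}" "{..i} \<inter> {i<..n} = {}"
    using i by auto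
  then have "cpoly c n (real (N * m)) = cpoly c' i (real m) + I"
    by (simp add: cpoly_def I_def c'_def sum.union_disjoint power_mult_distrib mult_ac)
  with mz \<open>I = of_int zI\<close> show ?thesis
    by (intro exI[of _ "N * m"] exI[of _ "z + zI"]) simp
qed

lemma cpoly_periodic_mod_Ints:
  assumes "\<forall>j\<in>{1..n}. c j \<in> \<rat>"
  shows "\<exists>N::nat. N > 0 \<and> (\<forall>k m. cpoly c n (real (k + N * m)) - cpoly c n (real k) \<in> \<int>)"
proof -
  obtain N :: nat where N: "N > 0" "\<forall>j\<in>{1..n}. real N * c j \<in> \<int>"
    using Rats_common_denominator[OF _ assms] by auto
  have "c j * (real (k + N * m) ^ j - real k ^ j) \<in> \<int>" if "j \<le> n" for j k m
  proof (cases "j = 0")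
    case False
    define s where "s = (\<Sum>i<j. real k ^ (j - Suc i) * real (k + N * m) ^ i)"
    have "c j * (real (k + N * m) ^ j - real k ^ j) = (real N * c j) * (real m * s)"
      unfolding s_def power_diff_sumr2 by simp
    moreover have "real N * c j \<in> \<int>"
      using N(2) False that by auto
    moreover have "s \<in> \<int>"
      unfolding s_def by (intro Ints_sum Ints_mult Ints_power) auto
    ultimately show ?thesis
      by (metis Ints_mult Ints_of_nat)
  qed simp
  then show ?thesis
    using N(1) by (intro exI[of _ N]) (auto simp: cpoly_def sum_subtractf[symmetric] right_diff_distrib[symmetric] intro!: Ints_sum)
qed

lemma cpoly_dense_mod_1_on_progression:
  assumes "n > 0" "c n \<notin> \<rat>" "N > 0" "e > 0"
  shows "\<exists>m::nat. \<exists>z::int. \<bar>cpoly c n (real (k0 + N * m)) - t - of_int z\<bar> < e"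
proof -
  define c' where "c' = (\<lambda>i. \<Sum>j=i..n. c j * real (j choose i) * real k0 ^ (j - i) * real N ^ i)"
  have "cpoly c n (real (k0 + N * m)) = cpoly c' n (real m)" for m
    using cpoly_affine[of c n "real k0" "real N" "real m"] by (simp add: c'_def)
  moreover have "c' n \<notin> \<rat>"
    using assms(2,3) by (simp add: c'_def Rats_mult_iff)
  ultimately show ?thesis
    using cpoly_dense_mod_1[of n n c' e t] assms(1,4) by auto
qed

section \<open>Iterates of the map and of the binomial matrix\<close>

lemma frac_eq_frac_if_diff_Ints: "x - y \<in> \<int> \<Longrightarrow> frac x = frac y"
  by (metis add.commute diff_add_cancel frac_add_int_right)

text \<open>The entry i of P^k v for the Pascal matrix P_il = (i choose l), 0 \<le> l \<le> i.\<close>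

definition pascal_pow :: "nat \<Rightarrow> (nat \<Rightarrow> real) \<Rightarrow> nat \<Rightarrow> real" where
  "pascal_pow k v i = (\<Sum>l\<le>i. real (i choose l) * real k ^ (i - l) * v l)"

lemma sum_choose_mult_power:
  fixes x :: real
  assumes "l \<le> i"
  shows "(\<Sum>j=l..i. real (i choose j) * real (j choose l) * x ^ (j - l))
    = real (i choose l) * (x + 1) ^ (i - l)"
proof -
  have "(\<Sum>j=l..i. real (i choose j) * real (j choose l) * x ^ (j - l))
      = (\<Sum>j=l..i. real (i choose l) * (real ((i - l) choose (j - l)) * x ^ (j - l)))"
    by (intro sum.cong refl) (simp flip: of_nat_mult add: choose_mult)
  also have "\<dots> = real (i choose l) * (\<Sum>j=l..i. real ((i - l) choose (j - l)) * x ^ (j - l))"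
    by (simp add: sum_distrib_left)
  also have "(\<Sum>j=l..i. real ((i - l) choose (j - l)) * x ^ (j - l)) = (\<Sum>s\<le>i - l. real ((i - l) choose s) * x ^ s)"
    using sum.shift_bounds_cl_nat_ivl[of "\<lambda>j. real ((i - l) choose (j - l)) * x ^ (j - l)" 0 l "i - l"] assms
    by (simp add: atLeast0AtMost)
  also have "\<dots> = (x + 1) ^ (i - l)"
    unfolding binomial_ring[of x 1] by simp
  finally show ?thesis .
qed

lemma pascal_pow_0: "pascal_pow 0 v i = v i"
proof -
  have "pascal_pow 0 v i = (\<Sum>l\<le>i. if l = i then v l else 0)"
    unfolding pascal_pow_def by (intro sum.cong) (auto simp: power_0_left)
  then show ?thesis by simp
qed

lemma pascal_pow_at_0: "pascal_pow k v 0 = v 0"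
  by (simp add: pascal_pow_def)

lemma pascal_pow_Suc: "pascal_pow (Suc k) v i = (\<Sum>j\<le>i. real (i choose j) * pascal_pow k v j)"
proof -
  have "(\<Sum>j\<le>i. real (i choose j) * pascal_pow k v j)
      = (\<Sum>j\<le>i. \<Sum>l\<le>j. real (i choose j) * real (j choose l) * real k ^ (j - l) * v l)"
    by (simp add: pascal_pow_def sum_distrib_left mult_ac)
  also have "\<dots> = (\<Sum>l\<le>i. (\<Sum>j=l..i. real (i choose j) * real (j choose l) * real k ^ (j - l)) * v l)"
    by (simp add: sum_atMost_triangle_swap sum_distrib_right)
  also have "\<dots> = pascal_pow (Suc k) v i"
    by (simp add: pascal_pow_def sum_choose_mult_power add.commute)
  finally show ?thesis ..
qed

lemma pascal_pow_Suc_split: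
  "pascal_pow (Suc k) v i = v 0 + (\<Sum>j=1..i. real (i choose j) * pascal_pow k v j)"
proof -
  have "{..i} = insert 0 {1..i}" by auto
  then show ?thesis
    by (simp add: pascal_pow_Suc pascal_pow_at_0)
qed

lemma pascal_pow_add: "pascal_pow k (\<lambda>l. v l + w l) i = pascal_pow k v i + pascal_pow k w i"
  by (simp add: pascal_pow_def distrib_left sum.distrib)

lemma pascal_pow_eq_cpoly:
  "pascal_pow k v n = cpoly (\<lambda>j. real (n choose (n - j)) * v (n - j)) n (real k)"
proof -
  have "pascal_pow k v n = (\<Sum>l=0..n. real (n choose l) * real k ^ (n - l) * v l)"
    by (simp add: pascal_pow_def atLeast0AtMost)
  also have "\<dots> = (\<Sum>j=0..n. real (n choose (n + 0 - j)) * real k ^ (n - (n + 0 - j)) * v (n + 0 - j))"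
    by (rule sum.atLeastAtMost_rev)
  also have "\<dots> = cpoly (\<lambda>j. real (n choose (n - j)) * v (n - j)) n (real k)"
    by (auto simp: cpoly_def atLeast0AtMost mult_ac intro!: sum.cong)
  finally show ?thesis .
qed

lemma fmap_funpow:
  assumes "x \<in> torus d"
  shows "(fmap \<zeta> d ^^ k) x = (\<lambda>i. if i \<in> {1..d} then frac (pascal_pow k (x(0 := \<zeta>)) i) else 0)"
proof (induction k)
  case 0
  then show ?case
    using assms by (auto simp: torus_def pascal_pow_0 frac_eq)
next
  case (Suc k)
  define v where "v = x(0 := \<zeta>)"
  have "frac (\<zeta> + (\<Sum>j=1..i. real (i choose j) * frac (pascal_pow k v j))) = frac (pascal_pow (Suc k) v i)"
    for i
  proof (rule frac_eq_frac_if_diff_Ints)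
    have "(\<zeta> + (\<Sum>j=1..i. real (i choose j) * frac (pascal_pow k v j))) - pascal_pow (Suc k) v i
        = - (\<Sum>j=1..i. real (i choose j) * of_int \<lfloor>pascal_pow k v j\<rfloor>)"
      by (simp add: pascal_pow_Suc_split v_def frac_def sum_subtractf[symmetric] right_diff_distrib sum_negf[symmetric])
    also have "\<dots> \<in> \<int>"
      by (intro Ints_minus Ints_sum Ints_mult) auto
    finally show "(\<zeta> + (\<Sum>j=1..i. real (i choose j) * frac (pascal_pow k v j))) - pascal_pow (Suc k) v i \<in> \<int>" .
  qed
  moreover have "(\<Sum>j=1..i. real (i choose j) * (if j \<in> {1..d} then frac (pascal_pow k v j) else 0))
      = (\<Sum>j=1..i. real (i choose j) * frac (pascal_pow k v j))" if "i \<le> d" for i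
    using that by (intro sum.cong) auto
  ultimately have "fmap \<zeta> d (\<lambda>i. if i \<in> {1..d} then frac (pascal_pow k v i) else 0)
      = (\<lambda>i. if i \<in> {1..d} then frac (pascal_pow (Suc k) v i) else 0)"
    by (auto simp: fmap_def)
  then show ?case
    unfolding v_def using Suc.IH by simp
qed

lemma Mmul_funpow:
  assumes "\<And>i. i \<notin> {1..d} \<Longrightarrow> r i = 0"
  shows "(Mmul d ^^ k) r = (\<lambda>i. if i \<in> {1..d} then pascal_pow k (r(0 := 0)) i else 0)"
proof (induction k)
  case 0
  then show ?case
    using assms by (auto simp: pascal_pow_0)
next
  case (Suc k)
  have "(\<Sum>j=1..i. real (i choose j) * (if j \<in> {1..d} then pascal_pow k (r(0 := 0)) j else 0))
      = (\<Sum>j=1..i. real (i choose j) * pascal_pow k (r(0 := 0)) j)" if "i \<le> d" for i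
    using that by (intro sum.cong) auto
  then have "Mmul d (\<lambda>i. if i \<in> {1..d} then pascal_pow k (r(0 := 0)) i else 0)
      = (\<lambda>i. if i \<in> {1..d} then pascal_pow (Suc k) (r(0 := 0)) i else 0)"
    by (auto simp: Mmul_def pascal_pow_Suc_split)
  then show ?case
    using Suc.IH by simp
qed

lemma fmap_funpow_last:
  assumes "x \<in> torus d" "d > 0"
  shows "(fmap \<zeta> d ^^ k) x d = frac (pascal_pow k (x(0 := \<zeta>)) d)"
  using fmap_funpow[OF assms(1)] assms(2) by simp

lemma stable_iff_pascal_pow:
  assumes "\<And>i. i \<notin> {1..d} \<Longrightarrow> r i = 0" "d > 0"
  shows "stable d r \<longleftrightarrow> (\<forall>k>0. pascal_pow k (r(0 := 0)) d \<in> \<int>)"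
  using Mmul_funpow[OF assms(1)] assms(2) by (simp add: stable_def)

section \<open>Closures of the digit sets\<close>

lemma int_translate_in_interval_if_approximable:
  fixes lo hi w :: real
  assumes "0 \<le> lo" "lo \<le> hi" "hi \<le> 1" "0 \<le> w" "w < 1"
    and approx: "\<And>e. e > 0 \<Longrightarrow> \<exists>u m. lo \<le> u \<and> u < hi \<and> \<bar>w - u - of_int m\<bar> < e"
  shows "\<exists>m::int. lo \<le> w + of_int m \<and> w + of_int m \<le> hi"
proof (rule ccontr)
  assume none: "\<nexists>m::int. lo \<le> w + of_int m \<and> w + of_int m \<le> hi"
  then have "\<not> (lo \<le> w \<and> w \<le> hi)" "\<not> (w = 0 \<and> hi = 1)"
    using assms(2) spec[OF none[unfolded not_ex], of 0] spec[OF none[unfolded not_ex], of 1] by auto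
  define e where "e = (if w < lo then min (lo - w) (1 - hi + w) else min (w - hi) (1 - w + lo))"
  have "e > 0"
    using assms \<open>\<not> (lo \<le> w \<and> w \<le> hi)\<close> \<open>\<not> (w = 0 \<and> hi = 1)\<close> by (auto simp: e_def)
  then obtain u and m :: int where um: "lo \<le> u" "u < hi" "\<bar>w - u - of_int m\<bar> < e"
    using approx by blast
  consider "m \<le> -1" | "m = 0" | "m \<ge> 1" by linarith
  then show False
  proof cases
    case 1
    then have "of_int m \<le> (-1::real)" by simp
    with um assms \<open>\<not> (lo \<le> w \<and> w \<le> hi)\<close> show False
      unfolding e_def by (auto split: if_splits)
  next
    case 2
    with um assms \<open>\<not> (lo \<le> w \<and> w \<le> hi)\<close> show False
      unfolding e_def by (auto split: if_splits)
  next
    case 3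
    then have "of_int m \<ge> (1::real)" by simp
    with um assms \<open>\<not> (lo \<le> w \<and> w \<le> hi)\<close> show False
      unfolding e_def by (auto split: if_splits)
  qed
qed

lemma torus_closure_Uset_last_coordinate:
  fixes b t :: nat
  assumes "p \<in> torus_closure d (Uset b d t)" "d > 0"
    and "0 \<le> log (real b) (real t)" "log (real b) (real t) \<le> log (real b) (real t + 1)" "log (real b) (real t + 1) \<le> 1"
  shows "\<exists>m::int. log (real b) (real t) \<le> p d + of_int m \<and> p d + of_int m \<le> log (real b) (real t + 1)"
proof (rule int_translate_in_interval_if_approximable)
  show "0 \<le> p d" "p d < 1"
    using assms(1,2) by (auto simp: torus_closure_def torus_def)
  fix e :: real
  assume "e > 0"
  with assms(1) obtain u where "u \<in> Uset b d t" "\<forall>i\<in>{1..d}. \<exists>m::int. \<bar>p i - u i - of_int m\<bar> < e"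
    unfolding torus_closure_def by blast
  with \<open>d > 0\<close> show "\<exists>u m. log (real b) (real t) \<le> u \<and> u < log (real b) (real t + 1)
      \<and> \<bar>p d - u - of_int m\<bar> < e"
    unfolding Uset_def by force
qed (use assms in auto)

lemma log_digit_arc_bounds:
  fixes b t :: nat
  assumes "b > 1" "t \<in> {1..b-1}"
  shows "0 \<le> log b t" "log b t \<le> log b (real t + 1)" "log b (real t + 1) \<le> 1"
    and "log b (real t + 1) - log b t \<le> log b 2"
proof -
  have "real t \<ge> 1" "real t + 1 \<le> real b"
    using assms(2) by auto
  with assms(1) show "0 \<le> log b t" "log b t \<le> log b (real t + 1)" "log b (real t + 1) \<le> 1"
    by auto
  have "log b (real t + 1) - log b t = log b ((real t + 1) / real t)"
    using assms(1) \<open>real t \<ge> 1\<close> by (simp add: log_divide)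
  also have "\<dots> \<le> log b 2"
    using assms(1) \<open>real t \<ge> 1\<close> by (simp add: field_simps)
  finally show "log b (real t + 1) - log b t \<le> log b 2" .
qed

lemma log_2_less_half:
  fixes b :: real
  assumes "b > 4"
  shows "log b 2 < 1/2"
proof -
  have "2 * log b 2 = log b (2 ^ 2)"
    using assms log_nat_power[of 2 b 2] by simp
  also have "\<dots> < log b b"
    using assms by (subst log_less_cancel_iff) auto
  also have "\<dots> = 1"
    using assms by simp
  finally show ?thesis by simp
qed

text \<open>
  For L = log_b 2, two points u, v of [0,1) with arc_separated L u v lie in no common closed digit
  arc [log_b t, log_b (t+1)]: these arcs have length at most L, and only the first one meets (0, L).
\<close>

definition arc_separated :: "real \<Rightarrow> real \<Rightarrow> real \<Rightarrow> bool" where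
  "arc_separated L u v \<longleftrightarrow> (L < frac (v - u) \<and> frac (v - u) < 1 - L)
     \<or> (0 < u \<and> u < L \<and> L < v \<and> v < 1) \<or> (0 < v \<and> v < L \<and> L < u \<and> u < 1)"

lemma frac_diff_near_Ints_if_int_translates_in_interval:
  fixes lo hi u v L :: real
  assumes "lo \<le> u + of_int m" "u + of_int m \<le> hi" "lo \<le> v + of_int n" "v + of_int n \<le> hi"
    and "hi - lo \<le> L" "L < 1/2"
  shows "frac (v - u) \<le> L \<or> 1 - L \<le> frac (v - u)"
proof -
  define \<delta> where "\<delta> = (v + of_int n) - (u + of_int m)"
  have "\<bar>\<delta>\<bar> \<le> L"
    using assms by (auto simp: \<delta>_def)
  have "frac (v - u) = frac \<delta>"
    by (rule frac_eq_frac_if_diff_Ints) (simp add: \<delta>_def)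
  also have "\<dots> = (if \<delta> \<ge> 0 then \<delta> else \<delta> + 1)"
    using \<open>\<bar>\<delta>\<bar> \<le> L\<close> \<open>L < 1/2\<close> by (auto simp: frac_unique_iff)
  finally show ?thesis
    using \<open>\<bar>\<delta>\<bar> \<le> L\<close> by auto
qed

lemma in_interval_if_int_translate_in_interval:
  fixes lo hi u :: real
  assumes "0 \<le> lo" "hi \<le> 1" "lo \<le> u + of_int m" "u + of_int m \<le> hi" "0 < u" "u < 1"
  shows "lo \<le> u \<and> u \<le> hi"
proof -
  have "of_int m < (1::real)" "(-1::real) < of_int m"
    using assms by linarith+
  then have "m = 0" by simp
  with assms show ?thesis by simp
qed

lemma closure_Uset_not_arc_separated:
  fixes b t :: nat
  assumes "b \<ge> 5" "t \<in> {1..b-1}" "d > 0"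
    and "p \<in> torus_closure d (Uset b d t)" "q \<in> torus_closure d (Uset b d t)"
  shows "\<not> arc_separated (log b 2) (p d) (q d)"
proof -
  define L where "L = log b 2"
  have "b > 1"
    using assms(1) by simp
  note bounds = log_digit_arc_bounds[OF this assms(2), folded L_def]
  have "L < 1/2"
    using log_2_less_half[of "real b"] assms(1) by (simp add: L_def)
  have translate: "\<exists>m::int. log b t \<le> r d + of_int m \<and> r d + of_int m \<le> log b (real t + 1)"
    if "r \<in> torus_closure d (Uset b d t)" for r
    using torus_closure_Uset_last_coordinate[OF that \<open>d > 0\<close>] bounds by simp
  then obtain m n :: int where m: "log b t \<le> p d + of_int m" "p d + of_int m \<le> log b (real t + 1)"
    and n: "log b t \<le> q d + of_int n" "q d + of_int n \<le> log b (real t + 1)"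
    using assms(4,5) by blast
  have "\<not> (L < frac (q d - p d) \<and> frac (q d - p d) < 1 - L)"
    using frac_diff_near_Ints_if_int_translates_in_interval[OF m n _ \<open>L < 1/2\<close>] bounds by force
  moreover have "\<not> (0 < u \<and> u < L \<and> L < v \<and> v < 1)" if "u \<in> {p d, q d}" "v \<in> {p d, q d}" for u v
  proof
    assume uv: "0 < u \<and> u < L \<and> L < v \<and> v < 1"
    have "log b t \<le> u" "v \<le> log b (real t + 1)"
      using that uv in_interval_if_int_translate_in_interval[OF bounds(1,3) m]
        in_interval_if_int_translate_in_interval[OF bounds(1,3) n]
      by auto
    with uv have "log b t < log b 2"
      by (simp add: L_def)
    then have "t = 1"
      using assms(1,2) by (simp add: log_less_cancel_iff)
    with \<open>v \<le> log b (real t + 1)\<close> uv show False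
      by (simp add: L_def)
  qed
  ultimately show ?thesis
    unfolding arc_separated_def L_def by blast
qed

section \<open>Separating the two orbits\<close>

lemma frac_eq_if_near:
  assumes "\<bar>x - c - of_int z\<bar> < e" "0 \<le> c - e" "c + e \<le> 1"
  shows "frac x = x - of_int z"
  using assms by (auto simp: frac_unique_iff)

lemma arc_separated_if_frac_middle:
  assumes "L < frac s" "frac s < 1 - L"
  shows "arc_separated L (frac x) (frac (x + s))"
proof -
  have "frac (frac (x + s) - frac x) = frac s"
    by (rule frac_eq_frac_if_diff_Ints) (simp add: frac_def)
  with assms show ?thesis
    by (simp add: arc_separated_def)
qed

lemma arc_separated_commute: "arc_separated L u v \<longleftrightarrow> arc_separated L v u"
proof -
  have "(L < frac (v - u) \<and> frac (v - u) < 1 - L) \<longleftrightarrow> (L < frac (u - v) \<and> frac (u - v) < 1 - L)"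
  proof (cases "v - u \<in> \<int>")
    case True
    then have "frac (v - u) = 0" "frac (u - v) = 0"
      by (simp_all add: Ints_minus[OF True, simplified])
    then show ?thesis by (simp only:)
  next
    case False
    then have "frac (u - v) = 1 - frac (v - u)"
      using frac_neg[of "v - u"] by simp
    then show ?thesis by linarith
  qed
  then show ?thesis
    unfolding arc_separated_def by blast
qed

lemma arc_separated_near_small_shift:
  assumes "0 < L" "L < 1/2" "0 < frac s" "frac s \<le> L"
  obtains c e where "e > 0"
    "\<And>x z. \<bar>x - c - of_int z\<bar> < e \<Longrightarrow> arc_separated L (frac x) (frac (x + s))"
proof (rule that[of "frac s / 4" "L - frac s / 2"])
  fix x and z :: int
  assume near: "\<bar>x - (L - frac s / 2) - of_int z\<bar> < frac s / 4"
  then have "frac x = x - of_int z"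
    using assms by (intro frac_eq_if_near[where c="L - frac s / 2" and e="frac s / 4"]) linarith+
  with near[unfolded abs_less_iff] have "L - 3 * frac s / 4 < frac x" "frac x < L - frac s / 4"
    by linarith+
  have "0 \<le> frac x + frac s" "frac x + frac s < 1"
    using assms \<open>frac x < L - frac s / 4\<close> frac_ge_0[of x] by linarith+
  have "frac (x + s) = frac (frac x + frac s)"
    by (rule frac_eq_frac_if_diff_Ints) (simp add: frac_def)
  also have "\<dots> = frac x + frac s"
    using \<open>0 \<le> frac x + frac s\<close> \<open>frac x + frac s < 1\<close> by (intro frac_eq_id) simp
  finally have "frac (x + s) = frac x + frac s" .
  with \<open>L - 3 * frac s / 4 < frac x\<close> \<open>frac x < L - frac s / 4\<close> show "arc_separated L (frac x) (frac (x + s))"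
    unfolding arc_separated_def using assms by (intro disjI2 disjI1 conjI) linarith+
qed (use assms in simp)

lemma arc_separated_near:
  assumes "0 < L" "L < 1/2" "s \<notin> \<int>" "\<not> (L < frac s \<and> frac s < 1 - L)"
  obtains c e where "e > 0"
    "\<And>x z. \<bar>x - c - of_int z\<bar> < e \<Longrightarrow> arc_separated L (frac x) (frac (x + s))"
proof (cases "frac s \<le> L")
  case True
  have "0 < frac s"
    using assms(3) by simp
  then show ?thesis
    by (rule arc_separated_near_small_shift[OF assms(1,2) _ True]) (rule that)
next
  case False
  have "frac (- s) = 1 - frac s"
    using assms(3) by (simp add: frac_neg)
  with False assms(4) frac_lt_1[of s] have "0 < frac (- s)" "frac (- s) \<le> L"
    by linarith+
  then obtain c e where "e > 0"
    and separated: "\<And>x z. \<bar>x - c - of_int z\<bar> < e \<Longrightarrow> arc_separated L (frac x) (frac (x + - s))"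
    using arc_separated_near_small_shift[OF assms(1,2)] by metis
  show ?thesis
  proof (rule that[OF \<open>e > 0\<close>, of "c - s"])
    fix x and z :: int
    assume "\<bar>x - (c - s) - of_int z\<bar> < e"
    then have "arc_separated L (frac (x + s)) (frac (x + s + - s))"
      by (intro separated) (simp add: algebra_simps)
    then show "arc_separated L (frac x) (frac (x + s))"
      by (simp add: arc_separated_commute)
  qed
qed

lemma exists_frac_cpoly_in_middle:
  assumes "0 < L" "L < 1/2" "j \<in> {1..n}" "c j \<notin> \<rat>"
  shows "\<exists>k::nat. L < frac (cpoly c n (real k)) \<and> frac (cpoly c n (real k)) < 1 - L"
proof -
  obtain k :: nat and z :: int where near: "\<bar>cpoly c n (real k) - 1/2 - of_int z\<bar> < 1/2 - L"
    using cpoly_dense_mod_1[of j n c "1/2 - L" "1/2"] assms by auto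
  then have "frac (cpoly c n (real k)) = cpoly c n (real k) - of_int z"
    using assms(1,2) by (intro frac_eq_if_near[where c="1/2" and e="1/2 - L"]) auto
  with near[unfolded abs_less_iff] show ?thesis
    by (intro exI[of _ k]) linarith
qed

lemma exists_arc_separated_orbit:
  fixes cQ cD :: "nat \<Rightarrow> real"
  assumes "0 < L" "L < 1/2" "n > 0" "cQ n \<notin> \<rat>" "cpoly cD n (real k0) \<notin> \<int>"
  shows "\<exists>k::nat. arc_separated L (frac (cpoly cQ n (real k)))
                    (frac (cpoly cQ n (real k) + cpoly cD n (real k)))"
proof (cases "\<exists>j\<in>{1..n}. cD j \<notin> \<rat>")
  txt \<open>
    Either the difference polynomial is dense mod 1, or it is periodic mod 1 and the first polynomial
    is moved along a residue class of the period instead.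
  \<close>
  case True
  then show ?thesis
    using exists_frac_cpoly_in_middle[OF assms(1,2)] arc_separated_if_frac_middle by meson
next
  case False
  then obtain N :: nat where "N > 0"
    and periodic: "\<And>k m. cpoly cD n (real (k + N * m)) - cpoly cD n (real k) \<in> \<int>"
    using cpoly_periodic_mod_Ints[of n cD] by auto
  define s where "s = cpoly cD n (real k0)"
  show ?thesis
  proof (cases "L < frac s \<and> frac s < 1 - L")
    case True
    then show ?thesis
      using arc_separated_if_frac_middle unfolding s_def by blast
  next
    case False
    have "s \<notin> \<int>"
      using assms(5) by (simp add: s_def)
    obtain c e where "e > 0"
      and separated: "\<And>x z. \<bar>x - c - of_int z\<bar> < e \<Longrightarrow> arc_separated L (frac x) (frac (x + s))"
      using arc_separated_near[OF assms(1,2) \<open>s \<notin> \<int>\<close> False] by metis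
    obtain m :: nat and z :: int where "\<bar>cpoly cQ n (real (k0 + N * m)) - c - of_int z\<bar> < e"
      using cpoly_dense_mod_1_on_progression[where c=cQ, OF assms(3,4) \<open>N > 0\<close> \<open>e > 0\<close>] by blast
    then have "arc_separated L (frac (cpoly cQ n (real (k0 + N * m))))
                 (frac (cpoly cQ n (real (k0 + N * m)) + s))"
      by (rule separated)
    moreover have "frac (cpoly cQ n (real (k0 + N * m)) + s)
        = frac (cpoly cQ n (real (k0 + N * m)) + cpoly cD n (real (k0 + N * m)))"
      using Ints_minus[OF periodic[of k0 m]] by (intro frac_eq_frac_if_diff_Ints) (simp add: s_def)
    ultimately show ?thesis
      by metis
  qed
qed

lemma exists_arc_separated_pascal_orbit:
  assumes "0 < L" "L < 1/2" "n > 0" "v 0 \<notin> \<rat>" "pascal_pow k0 w n \<notin> \<int>"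
  shows "\<exists>k. arc_separated L (frac (pascal_pow k v n)) (frac (pascal_pow k (\<lambda>l. v l + w l) n))"
  using exists_arc_separated_orbit[of L n "\<lambda>j. real (n choose (n - j)) * v (n - j)"
      "\<lambda>j. real (n choose (n - j)) * w (n - j)" k0] assms
  by (simp add: pascal_pow_add pascal_pow_eq_cpoly)

theorem mainTheorem5:
  fixes d b :: nat and a :: real and x y :: "nat \<Rightarrow> real"
  assumes "d > 0" and "b \<ge> 5" and "a > 0"
    and "log (real b) a \<notin> \<rat>"
    and "x \<in> torus d" and "y \<in> torus d"
    and "\<not> stable d (\<lambda>i. y i - x i)"
  shows "\<not> sim b (log (real b) a) d x y"
proof
  assume sim: "sim b (log (real b) a) d x y"
  define \<zeta> where "\<zeta> = log (real b) a"
  define w where "w = (\<lambda>i. y i - x i)(0 := 0)"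
  have y_split: "y(0 := \<zeta>) = (\<lambda>l. (x(0 := \<zeta>)) l + w l)"
    by (auto simp: w_def)
  obtain k0 where "pascal_pow k0 w d \<notin> \<int>"
    using assms(7) stable_iff_pascal_pow[of d "\<lambda>i. y i - x i"] assms(1,5,6)
    by (auto simp: torus_def w_def)
  then have "\<exists>k. arc_separated (log b 2) (frac (pascal_pow k (x(0 := \<zeta>)) d))
                    (frac (pascal_pow k (\<lambda>l. (x(0 := \<zeta>)) l + w l) d))"
    using assms(1,2,4) log_2_less_half[of "real b"]
    by (intro exists_arc_separated_pascal_orbit) (auto simp: \<zeta>_def)
  then obtain k where "arc_separated (log b 2) (frac (pascal_pow k (x(0 := \<zeta>)) d))
                         (frac (pascal_pow k (y(0 := \<zeta>)) d))"
    unfolding y_split by blast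
  moreover obtain t where "t \<in> {1..b-1}"
    "(fmap \<zeta> d ^^ k) x \<in> torus_closure d (Uset b d t)" "(fmap \<zeta> d ^^ k) y \<in> torus_closure d (Uset b d t)"
    using sim lessI[of k] unfolding sim_def sim_k_def \<zeta>_def by blast
  ultimately show False
    using closure_Uset_not_arc_separated[OF assms(2) _ assms(1)] fmap_funpow_last[OF _ assms(1)] assms(5,6)
    by metis
qed

end
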